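(* Let $(P,Q)$ be a smooth solution on $[\tau_1,\tau_2]\times S^1$ of \[ P_{\tau\tau}-e^{-2\tau}P_{\theta\theta}-e^{2P}(Q_\tau^2-e^{-2\tau}Q_\theta^2)=0,\qquad Q_{\tau\tau}-e^{-2\tau}Q_{\theta\theta}+2(P_\tau Q_\tau-e^{-2\tau}P_\theta Q_\theta)=0 . \] Assume $\tau_2\ge\tau_1\ge 2$ and $1\le P(\tau,\theta)\le\tau-1$ for all $(\tau,\theta)\in[\tau_1,\tau_2]\times S^1$. Then $F(\tau)\le F(\tau_1)(\tau_1/\tau)^2$ for all $\tau\in[\tau_1,\tau_2]$.
   Context: $S^1=\mathbb{R}/2\pi\mathbb{Z}$. The function $F$ is \[ F(\tau)=\tfrac12\sup_{\theta\in S^1}\Big[(P_\tau-\tfrac1\tau P+e^{-\tau}P_\theta)^2+e^{2P}(Q_\tau+e^{-\tau}Q_\theta)^2\Big] +\tfrac12\sup_{\theta\in S^1}\Big[(P_\tau-\tfrac1\tau P-e^{-\tau}P_\theta)^2+e^{2P}(Q_\tau-e^{-\tau}Q_\theta)^2\Big]. \] *)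

theory Defs
  imports "HOL-Analysis.Analysis"
begin

text \<open>Functions on the strip [a,b] x R (theta-periodic functions represent functions
on [a,b] x S^1).\<close>

definition smooth_strip :: "real \<Rightarrow> real \<Rightarrow> (real \<Rightarrow> real \<Rightarrow> real) \<Rightarrow> bool" where
  "smooth_strip a b f \<longleftrightarrow>
     (\<exists>D. f \<in> D \<and>
        (\<forall>g\<in>D. continuous_on ({a..b} \<times> UNIV) (\<lambda>(t, x). g t x)
          \<and> (\<exists>gt\<in>D. \<forall>t\<in>{a..b}. \<forall>x.
                ((\<lambda>s. g s x) has_real_derivative gt t x) (at t within {a..b}))
          \<and> (\<exists>gx\<in>D. \<forall>t\<in>{a..b}. \<forall>x.
                ((\<lambda>y. g t y) has_real_derivative gx t x) (at x))))"

definition F_energy ::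
  "(real \<Rightarrow> real \<Rightarrow> real) \<Rightarrow> (real \<Rightarrow> real \<Rightarrow> real) \<Rightarrow> (real \<Rightarrow> real \<Rightarrow> real) \<Rightarrow>
   (real \<Rightarrow> real \<Rightarrow> real) \<Rightarrow> (real \<Rightarrow> real \<Rightarrow> real) \<Rightarrow> real \<Rightarrow> real" where
  "F_energy P Pt Px Qt Qx \<tau> =
     1/2 * (SUP \<theta>. (Pt \<tau> \<theta> - P \<tau> \<theta> / \<tau> + exp (-\<tau>) * Px \<tau> \<theta>)^2
                  + exp (2 * P \<tau> \<theta>) * (Qt \<tau> \<theta> + exp (-\<tau>) * Qx \<tau> \<theta>)^2)
   + 1/2 * (SUP \<theta>. (Pt \<tau> \<theta> - P \<tau> \<theta> / \<tau> - exp (-\<tau>) * Px \<tau> \<theta>)^2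
                  + exp (2 * P \<tau> \<theta>) * (Qt \<tau> \<theta> - exp (-\<tau>) * Qx \<tau> \<theta>)^2)"

end

theory Submission
  imports Defs
begin

(* Write W+ and W- for the two quantities inside the suprema defining F, so that
   F = (sup W+ + sup W-) / 2.  Along the characteristics theta = c + e^-tau (for W+) and
   theta = c - e^-tau (for W-) the Gowdy equations become a transport system for the null
   components, and a direct computation gives

     d/dtau (tau^2 W+-)  <=  k(tau) (tau^2 W-+  -  tau^2 W+-),     k = (1 - 2/tau) / 2 >= 0;

   the hypothesis 1 <= P <= tau - 1 enters only through |1 - 2P/tau| <= 1 - 2/tau.  A maximum
   principle along characteristics (first touching time plus compactness of the circle) bounds
   tau^2 W+ and tau^2 W- by the solutions alpha, beta of alpha' = k (beta - alpha),
   beta' = k (alpha - beta) with initial values tau1^2 sup W+-(tau1).  Since alpha + beta is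
   constant, tau^2 F(tau) <= tau1^2 F(tau1). *)

lemma has_real_derivative_unique_Icc:
  fixes f :: "real \<Rightarrow> real"
  assumes "a < b" "t \<in> {a..b}"
    and "(f has_real_derivative d1) (at t within {a..b})"
    and "(f has_real_derivative d2) (at t within {a..b})"
  shows "d1 = d2"
  using vector_derivative_unique_within_closed_interval[of a b t f d1 d2] assms
  by (simp add: has_real_derivative_iff_has_vector_derivative)

lemma continuous_on_strip_slice_t:
  fixes f :: "real \<Rightarrow> real \<Rightarrow> real"
  assumes "continuous_on ({a..b} \<times> UNIV) (\<lambda>(t, x). f t x)" "I \<subseteq> {a..b}"
  shows "continuous_on I (\<lambda>t. f t x)"
proof -
  have "continuous_on I ((\<lambda>(t, x). f t x) \<circ> (\<lambda>t. (t, x)))"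
    by (rule continuous_on_compose)
      (use assms in \<open>auto intro!: continuous_intros continuous_on_subset[OF assms(1)]\<close>)
  then show ?thesis by (simp add: o_def)
qed

lemma continuous_on_strip_slice_x:
  fixes f :: "real \<Rightarrow> real \<Rightarrow> real"
  assumes "continuous_on ({a..b} \<times> UNIV) (\<lambda>(t, x). f t x)" "t \<in> {a..b}"
  shows "continuous_on UNIV (\<lambda>x. f t x)"
proof -
  have "continuous_on UNIV ((\<lambda>(t, x). f t x) \<circ> (\<lambda>x. (t, x)))"
    by (rule continuous_on_compose)
      (use assms in \<open>auto intro!: continuous_intros continuous_on_subset[OF assms(1)]\<close>)
  then show ?thesis by (simp add: o_def)
qed

lemma continuous_on_strip_cong:
  fixes f g :: "real \<Rightarrow> real \<Rightarrow> real"
  assumes "continuous_on ({a..b} \<times> UNIV) (\<lambda>(t, x). g t x)"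
    and "\<forall>t\<in>{a..b}. \<forall>x. f t x = g t x"
  shows "continuous_on ({a..b} \<times> UNIV) (\<lambda>(t, x). f t x)"
  using assms(1) by (rule continuous_on_eq) (use assms(2) in auto)

lemma has_real_derivative_along_curve:
  fixes f ft fx :: "real \<Rightarrow> real \<Rightarrow> real"
  assumes ft: "\<forall>t\<in>I. \<forall>x. ((\<lambda>s. f s x) has_real_derivative ft t x) (at t within I)"
    and fx: "\<forall>t\<in>I. \<forall>x. ((\<lambda>y. f t y) has_real_derivative fx t x) (at x)"
    and fx_cont: "continuous_on (I \<times> UNIV) (\<lambda>(t, x). fx t x)"
    and \<gamma>: "(\<gamma> has_real_derivative \<gamma>') (at s within I)"
    and s: "s \<in> I"
  shows "((\<lambda>s. f s (\<gamma> s)) has_real_derivative ft s (\<gamma> s) + \<gamma>' * fx s (\<gamma> s)) (at s within I)"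
proof -
  \<comment> \<open>continuity of one partial derivative suffices for total differentiability\<close>
  have "continuous_on (I \<times> UNIV) (\<lambda>(t, x). blinfun_mult_right (fx t x))"
    using continuous_on_compose2[OF bounded_linear.continuous_on[OF bounded_linear_blinfun_mult_right
        continuous_on_id] fx_cont]
    by (auto simp: split_beta)
  then have "continuous (at (s, \<gamma> s) within I \<times> UNIV) (\<lambda>(t, x). blinfun_mult_right (fx t x))"
    using s by (simp add: continuous_on_eq_continuous_within)
  then have "((\<lambda>(t, x). f t x) has_derivative
      (\<lambda>(h, k). ft s (\<gamma> s) * h + blinfun_mult_right (fx s (\<gamma> s)) k)) (at (s, \<gamma> s) within I \<times> UNIV)"
    using ft fx s
    by (intro has_derivative_partialsI)
      (auto simp: has_field_derivative_def blinfun_mult_right.rep_eq)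
  then have f: "((\<lambda>(t, x). f t x) has_derivative
      (\<lambda>(h, k). ft s (\<gamma> s) * h + blinfun_mult_right (fx s (\<gamma> s)) k))
      (at (s, \<gamma> s) within (\<lambda>s. (s, \<gamma> s)) ` I)"
    by (rule has_derivative_subset) auto
  have graph: "((\<lambda>s. (s, \<gamma> s)) has_derivative (\<lambda>h. (h, \<gamma>' * h))) (at s within I)"
    using \<gamma> unfolding has_field_derivative_def by (rule has_derivative_Pair[OF has_derivative_ident])
  have "((\<lambda>(t, x). f t x) \<circ> (\<lambda>s. (s, \<gamma> s)) has_derivative
      (\<lambda>(h, k). ft s (\<gamma> s) * h + blinfun_mult_right (fx s (\<gamma> s)) k) \<circ> (\<lambda>h. (h, \<gamma>' * h)))
      (at s within I)"
    by (rule diff_chain_within[OF graph f])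
  then have "((\<lambda>s. f s (\<gamma> s)) has_derivative
      (\<lambda>h. ft s (\<gamma> s) * h + blinfun_mult_right (fx s (\<gamma> s)) (\<gamma>' * h))) (at s within I)"
    by (simp add: o_def)
  then show ?thesis
    unfolding has_field_derivative_def
    by (rule has_derivative_eq_rhs) (simp add: fun_eq_iff blinfun_mult_right.rep_eq algebra_simps)
qed

lemma integral_Icc_eq_diff:
  fixes f f' :: "real \<Rightarrow> real"
  assumes "t \<in> {a..b}"
    and "\<forall>s\<in>{a..b}. (f has_real_derivative f' s) (at s within {a..b})"
  shows "integral {a..t} f' = f t - f a"
proof -
  have "(f' has_integral (f t - f a)) {a..t}"
  proof (rule fundamental_theorem_of_calculus)
    fix s assume "s \<in> {a..t}"
    with assms have "(f has_real_derivative f' s) (at s within {a..b})" by auto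
    then show "(f has_vector_derivative f' s) (at s within {a..t})"
      unfolding has_real_derivative_iff_has_vector_derivative[symmetric]
      by (rule has_field_derivative_subset) (use assms in auto)
  qed (use assms in auto)
  then show ?thesis by (rule integral_unique)
qed

lemma continuous_vanishing_integrals_imp_zero:
  fixes g :: "real \<Rightarrow> real"
  assumes "a < b" "continuous_on {a..b} g"
    and zero: "\<forall>u\<in>{a..b}. integral {a..u} g = 0"
    and t: "t \<in> {a..b}"
  shows "g t = 0"
proof -
  have "((\<lambda>u. integral {a..u} g) has_vector_derivative g t) (at t within {a..b})"
    using integral_has_vector_derivative[OF assms(2) t] .
  moreover have "((\<lambda>u. integral {a..u} g) has_vector_derivative 0) (at t within {a..b})"
    by (rule has_vector_derivative_transform_within[where f="\<lambda>_. 0" and d=1])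
      (use t zero in \<open>auto intro!: derivative_intros\<close>)
  ultimately show ?thesis
    using vector_derivative_unique_within_closed_interval[of a b t _ "g t" 0] assms(1) t by auto
qed

text \<open>Both mixed partials integrate in t to the increment of the x-derivative: one by the
  fundamental theorem of calculus, the other by differentiating under the integral sign.\<close>

lemma mixed_partials_eq:
  fixes f ft fx ftx fxt :: "real \<Rightarrow> real \<Rightarrow> real"
  assumes ab: "a < b"
    and ft: "\<forall>t\<in>{a..b}. \<forall>x. ((\<lambda>s. f s x) has_real_derivative ft t x) (at t within {a..b})"
    and fx: "\<forall>t\<in>{a..b}. \<forall>x. ((\<lambda>y. f t y) has_real_derivative fx t x) (at x)"
    and ftx: "\<forall>t\<in>{a..b}. \<forall>x. ((\<lambda>y. ft t y) has_real_derivative ftx t x) (at x)"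
    and fxt: "\<forall>t\<in>{a..b}. \<forall>x. ((\<lambda>s. fx s x) has_real_derivative fxt t x) (at t within {a..b})"
    and ft_cont: "continuous_on ({a..b} \<times> UNIV) (\<lambda>(t, x). ft t x)"
    and ftx_cont: "continuous_on ({a..b} \<times> UNIV) (\<lambda>(t, x). ftx t x)"
    and fxt_cont: "continuous_on ({a..b} \<times> UNIV) (\<lambda>(t, x). fxt t x)"
    and t: "t \<in> {a..b}"
  shows "ftx t x = fxt t x"
proof -
  have "integral {a..u} (\<lambda>s. ftx s x) = fx u x - fx a x" if u: "u \<in> {a..b}" for u
  proof -
    have sub: "{a..u} \<subseteq> {a..b}" using u by auto
    have "(\<lambda>(y, s). (s, y)) ` (UNIV \<times> cbox a u) \<subseteq> {a..b} \<times> UNIV"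
      using sub by auto
    then have "continuous_on (UNIV \<times> cbox a u) ((\<lambda>(t, x). ftx t x) \<circ> (\<lambda>(y, s). (s, y)))"
      by (intro continuous_on_compose continuous_on_subset[OF ftx_cont])
        (auto simp: split_beta intro!: continuous_intros)
    then have "((\<lambda>y. integral (cbox a u) (\<lambda>s. ft s y)) has_real_derivative
        integral (cbox a u) (\<lambda>s. ftx s x)) (at x within UNIV)"
      using sub ftx integrable_continuous_interval[OF continuous_on_strip_slice_t[OF ft_cont sub]]
      by (intro leibniz_rule_field_derivative[where fx="\<lambda>y s. ftx s y"])
        (auto simp: o_def split_beta)
    moreover have "integral {a..u} (\<lambda>s. ft s y) = f u y - f a y" for y
      using integral_Icc_eq_diff[of u a b "\<lambda>s. f s y"] u ft by auto
    ultimately have "((\<lambda>y. f u y - f a y) has_real_derivative integral {a..u} (\<lambda>s. ftx s x)) (at x)"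
      by simp
    moreover have "((\<lambda>y. f u y - f a y) has_real_derivative fx u x - fx a x) (at x)"
      using fx u ab by (auto intro!: derivative_intros)
    ultimately show ?thesis by (rule DERIV_unique)
  qed
  moreover have "integral {a..u} (\<lambda>s. fxt s x) = fx u x - fx a x" if "u \<in> {a..b}" for u
    using integral_Icc_eq_diff[of u a b "\<lambda>s. fx s x"] that fxt by auto
  moreover have "(\<lambda>s. ftx s x) integrable_on {a..u}" "(\<lambda>s. fxt s x) integrable_on {a..u}"
    if "u \<in> {a..b}" for u
    using that by (auto intro!: integrable_continuous_interval
        continuous_on_strip_slice_t[OF ftx_cont] continuous_on_strip_slice_t[OF fxt_cont])
  ultimately have "\<forall>u\<in>{a..b}. integral {a..u} (\<lambda>s. ftx s x - fxt s x) = 0"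
    by (simp add: integral_diff)
  moreover have "continuous_on {a..b} (\<lambda>s. ftx s x - fxt s x)"
    using continuous_on_strip_slice_t[OF ftx_cont order_refl]
      continuous_on_strip_slice_t[OF fxt_cont order_refl]
    by (intro continuous_intros)
  ultimately have "ftx t x - fxt t x = 0"
    by (intro continuous_vanishing_integrals_imp_zero[OF ab _ _ t])
  then show ?thesis by simp
qed

lemma smooth_strip_continuous:
  assumes "smooth_strip a b f"
  shows "continuous_on ({a..b} \<times> UNIV) (\<lambda>(t, x). f t x)"
  using assms unfolding smooth_strip_def by blast

lemma smooth_strip_has_partial_t:
  assumes "smooth_strip a b f"
  obtains ft where "\<forall>t\<in>{a..b}. \<forall>x. ((\<lambda>s. f s x) has_real_derivative ft t x) (at t within {a..b})"
    and "smooth_strip a b ft"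
  using assms unfolding smooth_strip_def by metis

lemma smooth_strip_has_partial_x:
  assumes "smooth_strip a b f"
  obtains fx where "\<forall>t\<in>{a..b}. \<forall>x. ((\<lambda>y. f t y) has_real_derivative fx t x) (at x)"
    and "smooth_strip a b fx"
  using assms unfolding smooth_strip_def by metis

lemma smooth_strip_cong:
  assumes g: "smooth_strip a b g" and eq: "\<forall>t\<in>{a..b}. \<forall>x. f t x = g t x"
  shows "smooth_strip a b f"
proof -
  obtain D where "g \<in> D" and D: "\<forall>h\<in>D. continuous_on ({a..b} \<times> UNIV) (\<lambda>(t, x). h t x)
          \<and> (\<exists>ht\<in>D. \<forall>t\<in>{a..b}. \<forall>x. ((\<lambda>s. h s x) has_real_derivative ht t x) (at t within {a..b}))
          \<and> (\<exists>hx\<in>D. \<forall>t\<in>{a..b}. \<forall>x. ((\<lambda>y. h t y) has_real_derivative hx t x) (at x))"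
    using g unfolding smooth_strip_def by auto
  from D \<open>g \<in> D\<close> obtain gt gx where "gt \<in> D" "gx \<in> D"
    and g_cont: "continuous_on ({a..b} \<times> UNIV) (\<lambda>(t, x). g t x)"
    and gt: "\<forall>t\<in>{a..b}. \<forall>x. ((\<lambda>s. g s x) has_real_derivative gt t x) (at t within {a..b})"
    and gx: "\<forall>t\<in>{a..b}. \<forall>x. ((\<lambda>y. g t y) has_real_derivative gx t x) (at x)"
    by auto
  have f_cont: "continuous_on ({a..b} \<times> UNIV) (\<lambda>(t, x). f t x)"
    by (rule continuous_on_strip_cong[OF g_cont eq])
  have ft: "\<forall>t\<in>{a..b}. \<forall>x. ((\<lambda>s. f s x) has_real_derivative gt t x) (at t within {a..b})"
  proof (intro ballI allI)
    fix t x assume t: "t \<in> {a..b}"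
    show "((\<lambda>s. f s x) has_real_derivative gt t x) (at t within {a..b})"
      by (rule has_field_derivative_transform_within[where f="\<lambda>s. g s x" and d=1])
        (use gt eq t in auto)
  qed
  have fx: "\<forall>t\<in>{a..b}. \<forall>x. ((\<lambda>y. f t y) has_real_derivative gx t x) (at x)"
  proof (intro ballI allI)
    fix t x assume "t \<in> {a..b}"
    then have "(\<lambda>y. f t y) = (\<lambda>y. g t y)" using eq by auto
    with gx \<open>t \<in> {a..b}\<close> show "((\<lambda>y. f t y) has_real_derivative gx t x) (at x)" by simp
  qed
  have closed: "\<forall>h\<in>insert f D. continuous_on ({a..b} \<times> UNIV) (\<lambda>(t, x). h t x)
          \<and> (\<exists>ht\<in>insert f D. \<forall>t\<in>{a..b}. \<forall>x. ((\<lambda>s. h s x) has_real_derivative ht t x) (at t within {a..b}))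
          \<and> (\<exists>hx\<in>insert f D. \<forall>t\<in>{a..b}. \<forall>x. ((\<lambda>y. h t y) has_real_derivative hx t x) (at x))"
    using D f_cont ft fx \<open>gt \<in> D\<close> \<open>gx \<in> D\<close> by (metis insert_iff)
  show ?thesis
    unfolding smooth_strip_def using closed by (intro exI[of _ "insert f D"] conjI insertI1)
qed

lemma smooth_strip_partial_t:
  assumes "a < b" "smooth_strip a b f"
    and ft: "\<forall>t\<in>{a..b}. \<forall>x. ((\<lambda>s. f s x) has_real_derivative ft t x) (at t within {a..b})"
  shows "smooth_strip a b ft"
proof -
  obtain g where g: "\<forall>t\<in>{a..b}. \<forall>x. ((\<lambda>s. f s x) has_real_derivative g t x) (at t within {a..b})"
    and g_smooth: "smooth_strip a b g"
    using smooth_strip_has_partial_t[OF assms(2)] by blast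
  have "\<forall>t\<in>{a..b}. \<forall>x. ft t x = g t x"
    using has_real_derivative_unique_Icc[OF assms(1)] ft g by blast
  with g_smooth show ?thesis by (rule smooth_strip_cong)
qed

lemma smooth_strip_partial_x:
  assumes "smooth_strip a b f"
    and fx: "\<forall>t\<in>{a..b}. \<forall>x. ((\<lambda>y. f t y) has_real_derivative fx t x) (at x)"
  shows "smooth_strip a b fx"
proof -
  obtain g where g: "\<forall>t\<in>{a..b}. \<forall>x. ((\<lambda>y. f t y) has_real_derivative g t x) (at x)"
    and g_smooth: "smooth_strip a b g"
    using smooth_strip_has_partial_x[OF assms(1)] by blast
  have "\<forall>t\<in>{a..b}. \<forall>x. fx t x = g t x"
    using DERIV_unique fx g by blast
  with g_smooth show ?thesis by (rule smooth_strip_cong)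
qed

lemma smooth_strip_mixed_partial:
  assumes ab: "a < b" and f: "smooth_strip a b f"
    and ft: "\<forall>t\<in>{a..b}. \<forall>x. ((\<lambda>s. f s x) has_real_derivative ft t x) (at t within {a..b})"
    and fx: "\<forall>t\<in>{a..b}. \<forall>x. ((\<lambda>y. f t y) has_real_derivative fx t x) (at x)"
  obtains ftx where "continuous_on ({a..b} \<times> UNIV) (\<lambda>(t, x). ftx t x)"
    and "\<forall>t\<in>{a..b}. \<forall>x. ((\<lambda>y. ft t y) has_real_derivative ftx t x) (at x)"
    and "\<forall>t\<in>{a..b}. \<forall>x. ((\<lambda>s. fx s x) has_real_derivative ftx t x) (at t within {a..b})"
proof -
  have ft_smooth: "smooth_strip a b ft" by (rule smooth_strip_partial_t[OF ab f ft])
  obtain ftx where ftx: "\<forall>t\<in>{a..b}. \<forall>x. ((\<lambda>y. ft t y) has_real_derivative ftx t x) (at x)"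
    and "smooth_strip a b ftx"
    using smooth_strip_has_partial_x[OF ft_smooth] by blast
  obtain fxt where fxt: "\<forall>t\<in>{a..b}. \<forall>x. ((\<lambda>s. fx s x) has_real_derivative fxt t x) (at t within {a..b})"
    and "smooth_strip a b fxt"
    using smooth_strip_has_partial_t[OF smooth_strip_partial_x[OF f fx]] by blast
  note conts = smooth_strip_continuous[OF ft_smooth] smooth_strip_continuous[OF \<open>smooth_strip a b ftx\<close>]
    smooth_strip_continuous[OF \<open>smooth_strip a b fxt\<close>]
  have "\<forall>t\<in>{a..b}. \<forall>x. ftx t x = fxt t x"
    using mixed_partials_eq[OF ab ft fx ftx fxt conts] by blast
  then show ?thesis
    using that conts ftx fxt by auto
qed

lemma periodic_shift_int:
  fixes g :: "real \<Rightarrow> real"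
  assumes per: "\<forall>x. g (x + 2 * pi) = g x"
  shows "g (x + of_int n * (2 * pi)) = g x"
proof (induction n arbitrary: x rule: int_induct[where k=0])
  case (step1 i)
  have "g (x + of_int (i + 1) * (2 * pi)) = g ((x + of_int i * (2 * pi)) + 2 * pi)"
    by (simp add: algebra_simps)
  with per step1 show ?case by simp
next
  case (step2 i)
  have "g (x + of_int i * (2 * pi)) = g ((x + of_int (i - 1) * (2 * pi)) + 2 * pi)"
    by (simp add: algebra_simps)
  with per step2 show ?case by simp
qed simp

lemma periodic_reduce:
  fixes g :: "real \<Rightarrow> real"
  assumes "\<forall>x. g (x + 2 * pi) = g x"
  obtains y where "y \<in> {0..2*pi}" "g x = g y"
proof
  define n where "n = \<lfloor>x / (2 * pi)\<rfloor>"
  have "of_int n \<le> x / (2 * pi)" "x / (2 * pi) < of_int n + 1"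
    unfolding n_def by linarith+
  then show "x - of_int n * (2 * pi) \<in> {0..2*pi}"
    by (simp add: field_simps)
  show "g x = g (x - of_int n * (2 * pi))"
    using periodic_shift_int[OF assms, of "x - of_int n * (2 * pi)" n] by simp
qed

lemma periodic_continuous_bdd_above:
  fixes g :: "real \<Rightarrow> real"
  assumes "continuous_on UNIV g" "\<forall>x. g (x + 2 * pi) = g x"
  shows "bdd_above (range g)"
proof -
  have "range g \<subseteq> g ` {0..2*pi}"
    proof
    fix y assume "y \<in> range g"
    then obtain x where "y = g x" by blast
    with periodic_reduce[OF assms(2), of x] show "y \<in> g ` {0..2*pi}" by blast
  qed
  moreover have "compact (g ` {0..2*pi})"
    by (rule compact_continuous_image[OF continuous_on_subset[OF assms(1)] compact_Icc]) auto
  ultimately show ?thesis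
    by (meson bdd_above_mono bounded_imp_bdd_above compact_imp_bounded)
qed

lemma periodic_partials:
  fixes f ft fx :: "real \<Rightarrow> real \<Rightarrow> real"
  assumes ab: "a < b"
    and per: "\<forall>t\<in>{a..b}. \<forall>x. f t (x + 2 * pi) = f t x"
    and ft: "\<forall>t\<in>{a..b}. \<forall>x. ((\<lambda>s. f s x) has_real_derivative ft t x) (at t within {a..b})"
    and fx: "\<forall>t\<in>{a..b}. \<forall>x. ((\<lambda>y. f t y) has_real_derivative fx t x) (at x)"
    and t: "t \<in> {a..b}"
  shows "ft t (x + 2 * pi) = ft t x" "fx t (x + 2 * pi) = fx t x"
proof -
  have "((\<lambda>s. f s x) has_real_derivative ft t (x + 2 * pi)) (at t within {a..b})"
    by (rule has_field_derivative_transform_within[where f="\<lambda>s. f s (x + 2 * pi)" and d=1])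
      (use ft t per in auto)
  then show "ft t (x + 2 * pi) = ft t x"
    using has_real_derivative_unique_Icc[OF ab t] ft t by blast
  have "((\<lambda>y. f t (y + 2 * pi)) has_real_derivative fx t (x + 2 * pi)) (at x)"
    using fx t DERIV_shift[of "f t" "fx t (x + 2 * pi)" x "2 * pi"] by auto
  moreover have "(\<lambda>y. f t (y + 2 * pi)) = (\<lambda>y. f t y)" using per t by auto
  ultimately have "((\<lambda>y. f t y) has_real_derivative fx t (x + 2 * pi)) (at x)" by simp
  then show "fx t (x + 2 * pi) = fx t x"
    using DERIV_unique fx t by blast
qed

lemma mult_le_half_sum_squares:
  fixes c m x y :: real
  assumes "\<bar>c\<bar> \<le> m"
  shows "c * (x * y) \<le> m / 2 * (x^2 + y^2)"
proof -
  have "c * (x * y) \<le> \<bar>c\<bar> * \<bar>x * y\<bar>"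
    by (metis abs_ge_self abs_mult)
  also have "\<dots> \<le> m * \<bar>x * y\<bar>"
    using assms by (intro mult_right_mono) auto
  also have "\<dots> \<le> m / 2 * (x^2 + y^2)"
  proof -
    have "m * (2 * \<bar>x\<bar> * \<bar>y\<bar>) \<le> m * (x^2 + y^2)"
      using assms sum_squares_bound[of "\<bar>x\<bar>" "\<bar>y\<bar>"] by (intro mult_left_mono) auto
    then show ?thesis by (simp add: abs_mult)
  qed
  finally show ?thesis .
qed

lemma energy_exchange_le:
  fixes t p E ap am bp bm :: real
  assumes t: "2 \<le> t" and p: "1 \<le> p" "p \<le> t - 1" and E: "0 \<le> E"
  shows "(2/t - 1) * (ap^2 + E * bp^2) + (1 - 2/t) * (ap * am) + (1 - 2*p/t) * E * (bp * bm)
    \<le> (1 - 2/t) / 2 * ((am^2 + E * bm^2) - (ap^2 + E * bp^2))"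
proof -
  have "\<bar>1 - 2*p/t\<bar> \<le> 1 - 2/t"
    using t p by (simp add: abs_le_iff field_simps)
  then have "E * ((1 - 2*p/t) * (bp * bm)) \<le> E * ((1 - 2/t) / 2 * (bp^2 + bm^2))"
    using E by (intro mult_left_mono mult_le_half_sum_squares)
  moreover have "(1 - 2/t) * (ap * am) \<le> (1 - 2/t) / 2 * (ap^2 + am^2)"
    using t by (intro mult_le_half_sum_squares) (simp add: field_simps)
  moreover have "(1 - 2/t) / 2 * ((am^2 + E * bm^2) - (ap^2 + E * bp^2))
      - ((2/t - 1) * (ap^2 + E * bp^2) + (1 - 2/t) * (ap * am) + (1 - 2*p/t) * E * (bp * bm))
    = ((1 - 2/t) / 2 * (ap^2 + am^2) - (1 - 2/t) * (ap * am))
      + (E * ((1 - 2/t) / 2 * (bp^2 + bm^2)) - E * ((1 - 2*p/t) * (bp * bm)))"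
    using t by (simp add: field_simps)
  ultimately show ?thesis
    by linarith
qed

lemma derivative_nonneg_at_first_zero:
  fixes \<phi> :: "real \<Rightarrow> real"
  assumes "a < s" "s \<le> b"
    and \<phi>: "(\<phi> has_real_derivative D) (at s within {a..b})"
    and "\<phi> s = 0" and below: "\<forall>r\<in>{a..<s}. \<phi> r < 0"
  shows "0 \<le> D"
proof (rule ccontr)
  assume "\<not> 0 \<le> D"
  then obtain \<delta> where "\<delta> > 0" and dec: "\<forall>h>0. s - h \<in> {a..b} \<longrightarrow> h < \<delta> \<longrightarrow> \<phi> s < \<phi> (s - h)"
    using has_real_derivative_neg_dec_left[OF \<phi>] by auto
  define h where "h = min (\<delta> / 2) (s - a)"
  have "h > 0" "h < \<delta>" "s - h \<in> {a..<s}"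
    using \<open>\<delta> > 0\<close> assms(1) unfolding h_def by auto
  then have "\<phi> s < \<phi> (s - h)" using dec assms(2) by auto
  with below \<open>s - h \<in> {a..<s}\<close> \<open>\<phi> s = 0\<close> show False by fastforce
qed

text \<open>By periodicity, the set where the function is nonnegative is represented inside the
  compact set [a, b] x [0, 2 pi]; the least time coordinate of that set is the first touching
  time.\<close>

lemma first_touching_time:
  fixes \<phi> :: "real \<Rightarrow> real \<Rightarrow> real"
  assumes cont: "continuous_on ({a..b} \<times> UNIV) (\<lambda>(t, x). \<phi> t x)"
    and per: "\<forall>t\<in>{a..b}. \<forall>x. \<phi> t (x + 2 * pi) = \<phi> t x"
    and init: "\<forall>x. \<phi> a x < 0"
    and t0: "t0 \<in> {a..b}" "0 \<le> \<phi> t0 x0"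
  obtains s x where "s \<in> {a<..b}" "\<phi> s x = 0" "\<forall>y. \<phi> s y \<le> 0" "\<forall>r\<in>{a..<s}. \<forall>y. \<phi> r y < 0"
proof -
  define S where "S = {a..b} \<times> {0..2*pi}"
  define K where "K = {p \<in> S. 0 \<le> \<phi> (fst p) (snd p)}"
  have reduce: "\<exists>y'\<in>{0..2*pi}. \<phi> t y = \<phi> t y'" if "t \<in> {a..b}" for t y
    using periodic_reduce[of "\<phi> t" y] per that by metis
  have "compact S" unfolding S_def by (intro compact_Times compact_Icc)
  have "S \<subseteq> {a..b} \<times> UNIV" unfolding S_def by auto
  then have "continuous_on S (\<lambda>p. \<phi> (fst p) (snd p))"
    using continuous_on_subset[OF cont] by (simp add: case_prod_unfold)
  then have "closed K"
    unfolding K_def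
    by (rule continuous_on_closed_Collect_le[OF continuous_on_const _ compact_imp_closed[OF \<open>compact S\<close>]])
  moreover have "S \<inter> K = K" unfolding K_def by auto
  ultimately have "compact K"
    using compact_Int_closed[OF \<open>compact S\<close>] by metis
  then have "compact (fst ` K)"
    by (rule compact_continuous_image[OF continuous_on_fst[OF continuous_on_id]])
  moreover have "fst ` K \<noteq> {}"
  proof -
    obtain y where "y \<in> {0..2*pi}" "\<phi> t0 x0 = \<phi> t0 y"
      using reduce[OF t0(1)] by blast
    then have "(t0, y) \<in> K" using t0 unfolding K_def S_def by simp
    then show ?thesis by blast
  qed
  ultimately obtain s where "s \<in> fst ` K" and s_min: "\<forall>r\<in>fst ` K. s \<le> r"
    using compact_attains_inf by blast
  then obtain x where sx: "s \<in> {a..b}" "0 \<le> \<phi> s x"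
    unfolding K_def S_def by force
  have below: "\<forall>r\<in>{a..<s}. \<forall>y. \<phi> r y < 0"
  proof (intro ballI allI)
    fix r y assume r: "r \<in> {a..<s}"
    then have "r \<in> {a..b}" using sx by auto
    with reduce obtain y' where "y' \<in> {0..2*pi}" "\<phi> r y = \<phi> r y'" by blast
    moreover have "(r, y') \<notin> K" using s_min r by force
    ultimately show "\<phi> r y < 0"
      using \<open>r \<in> {a..b}\<close> unfolding K_def S_def by auto
  qed
  have "s \<noteq> a" using sx init by (metis not_le)
  with sx have as: "a < s" by auto
  have "\<phi> s y \<le> 0" for y
  proof -
    have "closure {a..<s} = {a..s}" using as by simp
    moreover have "continuous_on {a..s} (\<lambda>r. \<phi> r y)"
      using sx by (intro continuous_on_strip_slice_t[OF cont]) auto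
    ultimately have "continuous_on (closure {a..<s}) (\<lambda>r. \<phi> r y)" by simp
    then show ?thesis
      by (rule continuous_le_on_closure) (use as below in \<open>auto simp: less_imp_le\<close>)
  qed
  with sx as below show ?thesis
    using that[of s x] by (simp add: order_antisym)
qed

lemma first_touch_impossible:
  fixes u v :: "real \<Rightarrow> real \<Rightarrow> real" and k \<alpha> \<beta> \<gamma> :: "real \<Rightarrow> real"
  assumes as: "a < s" "s \<le> b" and "0 < \<epsilon>" "0 \<le> k s"
    and u_below: "\<forall>r\<in>{a..<s}. \<forall>y. u r y < \<alpha> r + \<epsilon> * (r - a + 1)"
    and touch: "u s x = \<alpha> s + \<epsilon> * (s - a + 1)"
    and v_le: "v s x \<le> \<beta> s + \<epsilon> * (s - a + 1)"
    and "\<gamma> s = x" and u_char: "((\<lambda>r. u r (\<gamma> r)) has_real_derivative d) (at s within {a..b})"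
    and "d \<le> k s * (v s x - u s x)"
    and \<alpha>: "(\<alpha> has_real_derivative k s * (\<beta> s - \<alpha> s)) (at s within {a..b})"
  shows False
proof -
  have "((\<lambda>r. u r (\<gamma> r) - (\<alpha> r + \<epsilon> * (r - a + 1))) has_real_derivative
      d - (k s * (\<beta> s - \<alpha> s) + \<epsilon>)) (at s within {a..b})"
    using u_char \<alpha> by (auto intro!: derivative_eq_intros)
  then have "0 \<le> d - (k s * (\<beta> s - \<alpha> s) + \<epsilon>)"
    by (rule derivative_nonneg_at_first_zero[OF as]) (use touch u_below \<open>\<gamma> s = x\<close> in auto)
  moreover have "k s * (v s x - u s x) \<le> k s * (\<beta> s - \<alpha> s)"
    using v_le touch \<open>0 \<le> k s\<close> by (intro mult_left_mono) auto
  ultimately show False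
    using \<open>d \<le> k s * (v s x - u s x)\<close> \<open>0 < \<epsilon>\<close> by linarith
qed

locale characteristic_comparison =
  fixes a b :: real and u v :: "real \<Rightarrow> real \<Rightarrow> real" and k :: "real \<Rightarrow> real"
  assumes u_cont: "continuous_on ({a..b} \<times> UNIV) (\<lambda>(t, x). u t x)"
    and v_cont: "continuous_on ({a..b} \<times> UNIV) (\<lambda>(t, x). v t x)"
    and u_per: "\<forall>t\<in>{a..b}. \<forall>x. u t (x + 2 * pi) = u t x"
    and v_per: "\<forall>t\<in>{a..b}. \<forall>x. v t (x + 2 * pi) = v t x"
    and k_nonneg: "\<forall>t\<in>{a..b}. 0 \<le> k t"
    and u_char: "\<forall>t\<in>{a..b}. \<forall>x. \<exists>\<gamma> d. \<gamma> t = x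
        \<and> ((\<lambda>s. u s (\<gamma> s)) has_real_derivative d) (at t within {a..b}) \<and> d \<le> k t * (v t x - u t x)"
    and v_char: "\<forall>t\<in>{a..b}. \<forall>x. \<exists>\<gamma> d. \<gamma> t = x
        \<and> ((\<lambda>s. v s (\<gamma> s)) has_real_derivative d) (at t within {a..b}) \<and> d \<le> k t * (u t x - v t x)"
begin

text \<open>The margin grows with slope \<epsilon>, which makes the derivative at a first touching point
  strictly negative.\<close>

lemma comparison_with_margin:
  assumes \<alpha>: "\<forall>t\<in>{a..b}. (\<alpha> has_real_derivative k t * (\<beta> t - \<alpha> t)) (at t within {a..b})"
    and \<beta>: "\<forall>t\<in>{a..b}. (\<beta> has_real_derivative k t * (\<alpha> t - \<beta> t)) (at t within {a..b})"
    and u_init: "\<forall>x. u a x \<le> \<alpha> a" and v_init: "\<forall>x. v a x \<le> \<beta> a"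
    and "0 < \<epsilon>" and t: "t \<in> {a..b}"
  shows "u t x < \<alpha> t + \<epsilon> * (t - a + 1) \<and> v t x < \<beta> t + \<epsilon> * (t - a + 1)"
proof (rule ccontr)
  define \<phi> where
    "\<phi> t x = max (u t x - (\<alpha> t + \<epsilon> * (t - a + 1))) (v t x - (\<beta> t + \<epsilon> * (t - a + 1)))" for t x
  have "continuous_on {a..b} \<alpha>" "continuous_on {a..b} \<beta>"
    using \<alpha> \<beta> by (auto intro: DERIV_continuous_on)
  then have "continuous_on ({a..b} \<times> UNIV) (\<lambda>p. \<alpha> (fst p))"
    "continuous_on ({a..b} \<times> UNIV) (\<lambda>p. \<beta> (fst p))"
    by (auto intro: continuous_on_compose2[OF _ continuous_on_fst[OF continuous_on_id]])
  then have \<phi>_cont: "continuous_on ({a..b} \<times> UNIV) (\<lambda>(t, x). \<phi> t x)"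
    using u_cont v_cont unfolding \<phi>_def case_prod_unfold by (intro continuous_intros)
  have \<phi>_per: "\<forall>t\<in>{a..b}. \<forall>x. \<phi> t (x + 2 * pi) = \<phi> t x"
    using u_per v_per by (simp add: \<phi>_def)
  have \<phi>_init: "\<forall>x. \<phi> a x < 0"
  proof
    fix y
    have "u a y < \<alpha> a + \<epsilon>" "v a y < \<beta> a + \<epsilon>"
      using u_init v_init \<open>0 < \<epsilon>\<close> by (meson less_add_same_cancel1 order_le_less_trans)+
    then show "\<phi> a y < 0" by (simp add: \<phi>_def)
  qed
  assume "\<not> (u t x < \<alpha> t + \<epsilon> * (t - a + 1) \<and> v t x < \<beta> t + \<epsilon> * (t - a + 1))"
  then have "0 \<le> \<phi> t x" by (auto simp: \<phi>_def)
  then obtain s y where s: "s \<in> {a<..b}" and "\<phi> s y = 0"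
    and at_s: "\<forall>y. \<phi> s y \<le> 0" and below: "\<forall>r\<in>{a..<s}. \<forall>y. \<phi> r y < 0"
    by (rule first_touching_time[OF \<phi>_cont \<phi>_per \<phi>_init t])
  have as: "a < s" "s \<le> b" and "s \<in> {a..b}" using s by auto
  have u_le: "u s y \<le> \<alpha> s + \<epsilon> * (s - a + 1)" and v_le: "v s y \<le> \<beta> s + \<epsilon> * (s - a + 1)"
    using at_s by (auto simp: \<phi>_def)
  have u_below: "\<forall>r\<in>{a..<s}. \<forall>y. u r y < \<alpha> r + \<epsilon> * (r - a + 1)"
    and v_below: "\<forall>r\<in>{a..<s}. \<forall>y. v r y < \<beta> r + \<epsilon> * (r - a + 1)"
    using below by (auto simp: \<phi>_def)
  from \<open>\<phi> s y = 0\<close> consider "u s y = \<alpha> s + \<epsilon> * (s - a + 1)" | "v s y = \<beta> s + \<epsilon> * (s - a + 1)"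
    by (auto simp: \<phi>_def max_def split: if_splits)
  then show False
  proof cases
    case 1
    from u_char \<open>s \<in> {a..b}\<close> obtain \<gamma> d where "\<gamma> s = y"
      "((\<lambda>r. u r (\<gamma> r)) has_real_derivative d) (at s within {a..b})" "d \<le> k s * (v s y - u s y)"
      by blast
    with 1 show False
      using first_touch_impossible[where u=u and v=v and \<alpha>=\<alpha> and \<beta>=\<beta> and x=y,
          OF as \<open>0 < \<epsilon>\<close> _ u_below _ v_le] k_nonneg \<alpha> \<open>s \<in> {a..b}\<close>
      by blast
  next
    case 2
    from v_char \<open>s \<in> {a..b}\<close> obtain \<gamma> d where "\<gamma> s = y"
      "((\<lambda>r. v r (\<gamma> r)) has_real_derivative d) (at s within {a..b})" "d \<le> k s * (u s y - v s y)"
      by blast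
    with 2 show False
      using first_touch_impossible[where u=v and v=u and \<alpha>=\<beta> and \<beta>=\<alpha> and x=y,
          OF as \<open>0 < \<epsilon>\<close> _ v_below _ u_le] k_nonneg \<beta> \<open>s \<in> {a..b}\<close>
      by blast
  qed
qed

lemma comparison:
  assumes \<alpha>: "\<forall>t\<in>{a..b}. (\<alpha> has_real_derivative k t * (\<beta> t - \<alpha> t)) (at t within {a..b})"
    and \<beta>: "\<forall>t\<in>{a..b}. (\<beta> has_real_derivative k t * (\<alpha> t - \<beta> t)) (at t within {a..b})"
    and u_init: "\<forall>x. u a x \<le> \<alpha> a" and v_init: "\<forall>x. v a x \<le> \<beta> a"
    and t: "t \<in> {a..b}"
  shows "u t x \<le> \<alpha> t \<and> v t x \<le> \<beta> t"
proof -
  have "t - a + 1 > 0" using t by auto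
  have "u t x \<le> \<alpha> t + e \<and> v t x \<le> \<beta> t + e" if "0 < e" for e
    using comparison_with_margin[OF \<alpha> \<beta> u_init v_init _ t, of "e / (t - a + 1)" x]
      \<open>t - a + 1 > 0\<close> that by auto
  then show ?thesis
    by (meson field_le_epsilon)
qed

lemma sum_bound:
  assumes K: "\<forall>t\<in>{a..b}. (K has_real_derivative k t) (at t within {a..b})"
    and u_init: "\<forall>x. u a x \<le> A" and v_init: "\<forall>x. v a x \<le> B"
    and t: "t \<in> {a..b}"
  shows "u t x + v t y \<le> A + B"
proof -
  define g where "g t = exp (- 2 * (K t - K a))" for t
  define \<alpha> where "\<alpha> t = (A + B) / 2 + (A - B) / 2 * g t" for t
  define \<beta> where "\<beta> t = (A + B) / 2 - (A - B) / 2 * g t" for t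
  have g: "(g has_real_derivative - 2 * k s * g s) (at s within {a..b})" if "s \<in> {a..b}" for s
    unfolding g_def using K that by (auto intro!: derivative_eq_intros)
  have "(\<alpha> has_real_derivative k s * (\<beta> s - \<alpha> s)) (at s within {a..b})" if "s \<in> {a..b}" for s
    unfolding \<alpha>_def [abs_def]
    by (rule derivative_eq_intros refl g[OF that])+ (simp add: \<alpha>_def \<beta>_def field_simps)
  moreover have "(\<beta> has_real_derivative k s * (\<alpha> s - \<beta> s)) (at s within {a..b})" if "s \<in> {a..b}" for s
    unfolding \<beta>_def [abs_def]
    by (rule derivative_eq_intros refl g[OF that])+ (simp add: \<alpha>_def \<beta>_def field_simps)
  moreover have "\<alpha> a = A" "\<beta> a = B"
    by (simp_all add: \<alpha>_def \<beta>_def g_def field_simps)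
  ultimately have "u t x \<le> \<alpha> t" "v t y \<le> \<beta> t"
    using comparison[of \<alpha> \<beta>] u_init v_init t by auto
  moreover have "\<alpha> t + \<beta> t = A + B"
    by (simp add: \<alpha>_def \<beta>_def)
  ultimately show ?thesis
    by linarith
qed

end

lemma cSUP_add_le:
  fixes f g :: "'a \<Rightarrow> real"
  assumes "\<And>x y. f x + g y \<le> c"
  shows "(SUP x. f x) + (SUP y. g y) \<le> c"
proof -
  have "(SUP x. f x) \<le> c - g y" for y
    using assms by (intro cSUP_least) (auto simp: algebra_simps)
  then have "(SUP y. g y) \<le> c - (SUP x. f x)"
    by (intro cSUP_least) (auto simp: algebra_simps)
  then show ?thesis by simp
qed

definition char_curve :: "real \<Rightarrow> real \<Rightarrow> real \<Rightarrow> real" where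
  "char_curve \<sigma> c s = c + \<sigma> * exp (- s)"

lemma has_real_derivative_along_char_curve:
  fixes f ft fx :: "real \<Rightarrow> real \<Rightarrow> real"
  assumes "\<forall>t\<in>I. \<forall>x. ((\<lambda>s. f s x) has_real_derivative ft t x) (at t within I)"
    and "\<forall>t\<in>I. \<forall>x. ((\<lambda>y. f t y) has_real_derivative fx t x) (at x)"
    and "continuous_on (I \<times> UNIV) (\<lambda>(t, x). fx t x)"
    and "t \<in> I"
  shows "((\<lambda>s. f s (char_curve \<sigma> c s)) has_real_derivative
      ft t (char_curve \<sigma> c t) - \<sigma> * exp (- t) * fx t (char_curve \<sigma> c t)) (at t within I)"
proof -
  have "(char_curve \<sigma> c has_real_derivative - \<sigma> * exp (- t)) (at t within I)"
    unfolding char_curve_def [abs_def] by (auto intro!: derivative_eq_intros)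
  from has_real_derivative_along_curve[OF assms(1-3) this assms(4)] show ?thesis
    by simp
qed

lemma exp_minus_double: "exp (- (2 * t)) = exp (- t)^2" for t :: real
  using exp_of_nat_mult[of 2 "- t"] by simp

locale gowdy_solution =
  fixes P Q Pt Px Ptt Pxx Qt Qx Qtt Qxx :: "real \<Rightarrow> real \<Rightarrow> real" and \<tau>1 \<tau>2 :: real
  assumes smoothP: "smooth_strip \<tau>1 \<tau>2 P"
    and smoothQ: "smooth_strip \<tau>1 \<tau>2 Q"
    and perP: "\<forall>t\<in>{\<tau>1..\<tau>2}. \<forall>x. P t (x + 2 * pi) = P t x"
    and perQ: "\<forall>t\<in>{\<tau>1..\<tau>2}. \<forall>x. Q t (x + 2 * pi) = Q t x"
    and dPt: "\<forall>t\<in>{\<tau>1..\<tau>2}. \<forall>x. ((\<lambda>s. P s x) has_real_derivative Pt t x) (at t within {\<tau>1..\<tau>2})"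
    and dPx: "\<forall>t\<in>{\<tau>1..\<tau>2}. \<forall>x. ((\<lambda>y. P t y) has_real_derivative Px t x) (at x)"
    and dPtt: "\<forall>t\<in>{\<tau>1..\<tau>2}. \<forall>x. ((\<lambda>s. Pt s x) has_real_derivative Ptt t x) (at t within {\<tau>1..\<tau>2})"
    and dPxx: "\<forall>t\<in>{\<tau>1..\<tau>2}. \<forall>x. ((\<lambda>y. Px t y) has_real_derivative Pxx t x) (at x)"
    and dQt: "\<forall>t\<in>{\<tau>1..\<tau>2}. \<forall>x. ((\<lambda>s. Q s x) has_real_derivative Qt t x) (at t within {\<tau>1..\<tau>2})"
    and dQx: "\<forall>t\<in>{\<tau>1..\<tau>2}. \<forall>x. ((\<lambda>y. Q t y) has_real_derivative Qx t x) (at x)"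
    and dQtt: "\<forall>t\<in>{\<tau>1..\<tau>2}. \<forall>x. ((\<lambda>s. Qt s x) has_real_derivative Qtt t x) (at t within {\<tau>1..\<tau>2})"
    and dQxx: "\<forall>t\<in>{\<tau>1..\<tau>2}. \<forall>x. ((\<lambda>y. Qx t y) has_real_derivative Qxx t x) (at x)"
    and eqP: "\<forall>t\<in>{\<tau>1..\<tau>2}. \<forall>x.
       Ptt t x - exp (-2*t) * Pxx t x - exp (2 * P t x) * ((Qt t x)^2 - exp (-2*t) * (Qx t x)^2) = 0"
    and eqQ: "\<forall>t\<in>{\<tau>1..\<tau>2}. \<forall>x.
       Qtt t x - exp (-2*t) * Qxx t x + 2 * (Pt t x * Qt t x - exp (-2*t) * Px t x * Qx t x) = 0"
    and \<tau>12: "\<tau>1 < \<tau>2"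
begin

definition P_char :: "real \<Rightarrow> real \<Rightarrow> real \<Rightarrow> real" where
  "P_char \<sigma> t x = Pt t x - P t x / t + \<sigma> * exp (- t) * Px t x"

definition Q_char :: "real \<Rightarrow> real \<Rightarrow> real \<Rightarrow> real" where
  "Q_char \<sigma> t x = Qt t x + \<sigma> * exp (- t) * Qx t x"

definition char_energy :: "real \<Rightarrow> real \<Rightarrow> real \<Rightarrow> real" where
  "char_energy \<sigma> t x = (P_char \<sigma> t x)^2 + exp (2 * P t x) * (Q_char \<sigma> t x)^2"

lemma F_energy_eq_char_energy:
  "F_energy P Pt Px Qt Qx t = 1/2 * (SUP x. char_energy 1 t x) + 1/2 * (SUP x. char_energy (-1) t x)"
  by (simp add: F_energy_def char_energy_def P_char_def Q_char_def)

lemma smooth_strip_partials: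
  "smooth_strip \<tau>1 \<tau>2 Pt" "smooth_strip \<tau>1 \<tau>2 Px" "smooth_strip \<tau>1 \<tau>2 Pxx"
  "smooth_strip \<tau>1 \<tau>2 Qt" "smooth_strip \<tau>1 \<tau>2 Qx" "smooth_strip \<tau>1 \<tau>2 Qxx"
  using smooth_strip_partial_t[OF \<tau>12] smooth_strip_partial_x smoothP smoothQ dPt dPx dPxx dQt dQx dQxx
  by metis+

lemmas P_continuous = smooth_strip_continuous[OF smoothP]
  and Pt_continuous = smooth_strip_continuous[OF smooth_strip_partials(1)]
  and Px_continuous = smooth_strip_continuous[OF smooth_strip_partials(2)]
  and Pxx_continuous = smooth_strip_continuous[OF smooth_strip_partials(3)]
  and Qt_continuous = smooth_strip_continuous[OF smooth_strip_partials(4)]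
  and Qx_continuous = smooth_strip_continuous[OF smooth_strip_partials(5)]
  and Qxx_continuous = smooth_strip_continuous[OF smooth_strip_partials(6)]

lemma char_energy_periodic:
  assumes "t \<in> {\<tau>1..\<tau>2}"
  shows "char_energy \<sigma> t (x + 2 * pi) = char_energy \<sigma> t x"
  using assms perP periodic_partials[OF \<tau>12 perP dPt dPx] periodic_partials[OF \<tau>12 perQ dQt dQx]
  by (simp add: char_energy_def P_char_def Q_char_def)

lemma char_energy_continuous:
  assumes "0 < \<tau>1"
  shows "continuous_on ({\<tau>1..\<tau>2} \<times> UNIV) (\<lambda>(t, x). char_energy \<sigma> t x)"
proof -
  have "\<forall>p\<in>{\<tau>1..\<tau>2} \<times> (UNIV :: real set). fst p \<noteq> 0" using assms by auto
  with P_continuous Pt_continuous Px_continuous Qt_continuous Qx_continuous show ?thesis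
    unfolding char_energy_def P_char_def Q_char_def case_prod_unfold
    by (auto intro!: continuous_intros)
qed

lemma P_char_along_char:
  assumes \<sigma>: "\<sigma>^2 = 1" and t: "t \<in> {\<tau>1..\<tau>2}" "t \<noteq> 0"
    and x: "x = char_curve \<sigma> c t"
  shows "((\<lambda>s. P_char \<sigma> s (char_curve \<sigma> c s)) has_real_derivative
      exp (2 * P t x) * (Q_char \<sigma> t x * Q_char (-\<sigma>) t x)
      - (P_char \<sigma> t x - P_char (-\<sigma>) t x) / 2 - P_char (-\<sigma>) t x / t) (at t within {\<tau>1..\<tau>2})"
proof -
  obtain Ptx where Ptx_continuous: "continuous_on ({\<tau>1..\<tau>2} \<times> UNIV) (\<lambda>(t, x). Ptx t x)"
    and dPtx: "\<forall>t\<in>{\<tau>1..\<tau>2}. \<forall>x. ((\<lambda>y. Pt t y) has_real_derivative Ptx t x) (at x)"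
    and dPxt: "\<forall>t\<in>{\<tau>1..\<tau>2}. \<forall>x. ((\<lambda>s. Px s x) has_real_derivative Ptx t x) (at t within {\<tau>1..\<tau>2})"
    using smooth_strip_mixed_partial[OF \<tau>12 smoothP dPt dPx] by blast
  note along = has_real_derivative_along_char_curve[where \<sigma>=\<sigma> and c=c, OF _ _ _ t(1)]
  note P' = along[OF dPt dPx Px_continuous]
    and Pt' = along[OF dPtt dPtx Ptx_continuous]
    and Px' = along[OF dPxt dPxx Pxx_continuous]
  have "Ptt t x - exp (-2*t) * Pxx t x - exp (2 * P t x) * ((Qt t x)^2 - exp (-2*t) * (Qx t x)^2) = 0"
    using eqP t(1) by blast
  then have Ptt: "Ptt t x = exp (- t)^2 * Pxx t x + exp (2 * P t x) * (Qt t x ^ 2 - exp (- t)^2 * Qx t x ^ 2)"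
    by (simp add: exp_minus_double)
  from \<sigma> have "\<sigma> = 1 \<or> \<sigma> = -1" by (simp add: power2_eq_1_iff)
  show ?thesis
    unfolding P_char_def Q_char_def
    apply (rule derivative_eq_intros refl P' Pt' Px' t(2))+
    unfolding x [symmetric] Ptt
    using \<open>\<sigma> = 1 \<or> \<sigma> = -1\<close> t(2) by (auto simp: field_simps power2_eq_square)
qed

lemma Q_char_along_char:
  assumes \<sigma>: "\<sigma>^2 = 1" and t: "t \<in> {\<tau>1..\<tau>2}"
    and x: "x = char_curve \<sigma> c t"
  shows "((\<lambda>s. Q_char \<sigma> s (char_curve \<sigma> c s)) has_real_derivative
      - (Q_char \<sigma> t x * (P_char (-\<sigma>) t x + P t x / t) + Q_char (-\<sigma>) t x * (P_char \<sigma> t x + P t x / t))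
      - (Q_char \<sigma> t x - Q_char (-\<sigma>) t x) / 2) (at t within {\<tau>1..\<tau>2})"
proof -
  obtain Qtx where Qtx_continuous: "continuous_on ({\<tau>1..\<tau>2} \<times> UNIV) (\<lambda>(t, x). Qtx t x)"
    and dQtx: "\<forall>t\<in>{\<tau>1..\<tau>2}. \<forall>x. ((\<lambda>y. Qt t y) has_real_derivative Qtx t x) (at x)"
    and dQxt: "\<forall>t\<in>{\<tau>1..\<tau>2}. \<forall>x. ((\<lambda>s. Qx s x) has_real_derivative Qtx t x) (at t within {\<tau>1..\<tau>2})"
    using smooth_strip_mixed_partial[OF \<tau>12 smoothQ dQt dQx] by blast
  note along = has_real_derivative_along_char_curve[where \<sigma>=\<sigma> and c=c, OF _ _ _ t]
  note Qt' = along[OF dQtt dQtx Qtx_continuous]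
    and Qx' = along[OF dQxt dQxx Qxx_continuous]
  have "Qtt t x - exp (-2*t) * Qxx t x + 2 * (Pt t x * Qt t x - exp (-2*t) * Px t x * Qx t x) = 0"
    using eqQ t by blast
  then have Qtt: "Qtt t x = exp (- t)^2 * Qxx t x - 2 * (Pt t x * Qt t x - exp (- t)^2 * Px t x * Qx t x)"
    by (simp add: exp_minus_double)
  from \<sigma> have "\<sigma> = 1 \<or> \<sigma> = -1" by (simp add: power2_eq_1_iff)
  show ?thesis
    unfolding Q_char_def
    apply (rule derivative_eq_intros refl Qt' Qx')+
    unfolding x [symmetric] Qtt
    using \<open>\<sigma> = 1 \<or> \<sigma> = -1\<close> by (auto simp: P_char_def field_simps power2_eq_square)
qed

lemma P_along_char:
  assumes t: "t \<in> {\<tau>1..\<tau>2}" and x: "x = char_curve \<sigma> c t"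
  shows "((\<lambda>s. P s (char_curve \<sigma> c s)) has_real_derivative P_char (-\<sigma>) t x + P t x / t)
    (at t within {\<tau>1..\<tau>2})"
  using has_real_derivative_along_char_curve[OF dPt dPx Px_continuous t, of \<sigma> c]
  by (simp add: P_char_def x)

lemma weighted_char_energy_along_char:
  assumes \<sigma>: "\<sigma>^2 = 1" and t: "t \<in> {\<tau>1..\<tau>2}" "t \<noteq> 0"
    and x: "x = char_curve \<sigma> c t"
  shows "((\<lambda>s. s^2 * char_energy \<sigma> s (char_curve \<sigma> c s)) has_real_derivative
      t^2 * ((2/t - 1) * char_energy \<sigma> t x + (1 - 2/t) * (P_char \<sigma> t x * P_char (-\<sigma>) t x)
        + (1 - 2 * P t x / t) * exp (2 * P t x) * (Q_char \<sigma> t x * Q_char (-\<sigma>) t x)))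
    (at t within {\<tau>1..\<tau>2})"
  unfolding char_energy_def
  apply (rule derivative_eq_intros refl P_along_char[OF t(1) x] P_char_along_char[OF \<sigma> t x]
      Q_char_along_char[OF \<sigma> t(1) x])+
  unfolding x [symmetric]
  using t(2) by (simp add: field_simps power2_eq_square)

end

locale gowdy_solution_bounded = gowdy_solution +
  assumes \<tau>1: "2 \<le> \<tau>1"
    and Pbd: "\<forall>t\<in>{\<tau>1..\<tau>2}. \<forall>x. 1 \<le> P t x \<and> P t x \<le> t - 1"
begin

lemma char_energy_transport:
  assumes \<sigma>: "\<sigma>^2 = 1" and t: "t \<in> {\<tau>1..\<tau>2}"
  shows "\<exists>\<gamma> d. \<gamma> t = x
    \<and> ((\<lambda>s. s^2 * char_energy \<sigma> s (\<gamma> s)) has_real_derivative d) (at t within {\<tau>1..\<tau>2})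
    \<and> d \<le> (1 - 2/t) / 2 * (t^2 * char_energy (-\<sigma>) t x - t^2 * char_energy \<sigma> t x)"
proof -
  define c where "c = x - \<sigma> * exp (- t)"
  have x: "x = char_curve \<sigma> c t" by (simp add: c_def char_curve_def)
  have "2 \<le> t" "t \<noteq> 0" using t \<tau>1 by auto
  have "(2/t - 1) * char_energy \<sigma> t x + (1 - 2/t) * (P_char \<sigma> t x * P_char (-\<sigma>) t x)
      + (1 - 2 * P t x / t) * exp (2 * P t x) * (Q_char \<sigma> t x * Q_char (-\<sigma>) t x)
    \<le> (1 - 2/t) / 2 * (char_energy (-\<sigma>) t x - char_energy \<sigma> t x)" (is "?L \<le> ?R")
    unfolding char_energy_def using Pbd t by (intro energy_exchange_le[OF \<open>2 \<le> t\<close>]) auto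
  then have "t^2 * ?L \<le> t^2 * ?R"
    by (rule mult_left_mono) simp
  also have "t^2 * ?R = (1 - 2/t) / 2 * (t^2 * char_energy (-\<sigma>) t x - t^2 * char_energy \<sigma> t x)"
    by (simp add: algebra_simps)
  finally have "t^2 * ?L \<le> \<dots>" .
  with weighted_char_energy_along_char[OF \<sigma> t \<open>t \<noteq> 0\<close> x] x show ?thesis
    by blast
qed

theorem F_energy_decay:
  assumes t: "t \<in> {\<tau>1..\<tau>2}"
  shows "F_energy P Pt Px Qt Qx t \<le> F_energy P Pt Px Qt Qx \<tau>1 * (\<tau>1 / t)^2"
proof -
  let ?S = "\<lambda>\<sigma>. SUP x. char_energy \<sigma> \<tau>1 x"
  have \<tau>1_in: "\<tau>1 \<in> {\<tau>1..\<tau>2}" and "0 < \<tau>1" "0 < t" using t \<tau>1 by auto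
  have cont: "continuous_on ({\<tau>1..\<tau>2} \<times> UNIV) (\<lambda>(t, x). t^2 * char_energy \<sigma> t x)" for \<sigma>
    using char_energy_continuous[OF \<open>0 < \<tau>1\<close>, of \<sigma>] unfolding case_prod_unfold
    by (intro continuous_intros)
  have init: "\<tau>1^2 * char_energy \<sigma> \<tau>1 x \<le> \<tau>1^2 * ?S \<sigma>" for \<sigma> x
  proof -
    have "bdd_above (range (char_energy \<sigma> \<tau>1))"
      using continuous_on_strip_slice_x[OF char_energy_continuous[OF \<open>0 < \<tau>1\<close>] \<tau>1_in]
        char_energy_periodic[OF \<tau>1_in] by (intro periodic_continuous_bdd_above) auto
    then show ?thesis by (intro mult_left_mono cSUP_upper) auto
  qed
  interpret characteristic_comparison \<tau>1 \<tau>2 "\<lambda>t x. t^2 * char_energy 1 t x"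
    "\<lambda>t x. t^2 * char_energy (-1) t x" "\<lambda>t. (1 - 2/t) / 2"
    using cont char_energy_periodic char_energy_transport[of 1] char_energy_transport[of "-1"] \<tau>1
    by unfold_locales auto
  have "((\<lambda>t. t / 2 - ln t) has_real_derivative (1 - 2/s) / 2) (at s within {\<tau>1..\<tau>2})"
    if "s \<in> {\<tau>1..\<tau>2}" for s
    using that \<tau>1 by (auto intro!: derivative_eq_intros simp: field_simps)
  then have "t^2 * char_energy 1 t x + t^2 * char_energy (-1) t y \<le> \<tau>1^2 * ?S 1 + \<tau>1^2 * ?S (-1)"
    for x y
    using sum_bound[of "\<lambda>t. t / 2 - ln t"] init t by simp
  then have "char_energy 1 t x + char_energy (-1) t y \<le> (\<tau>1 / t)^2 * (?S 1 + ?S (-1))" for x y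
    using \<open>0 < t\<close> by (simp add: field_simps)
  then have "(SUP x. char_energy 1 t x) + (SUP y. char_energy (-1) t y) \<le> (\<tau>1 / t)^2 * (?S 1 + ?S (-1))"
    by (rule cSUP_add_le)
  then have "1/2 * (SUP x. char_energy 1 t x) + 1/2 * (SUP x. char_energy (-1) t x)
      \<le> (1/2 * ?S 1 + 1/2 * ?S (-1)) * (\<tau>1 / t)^2"
    by (simp add: algebra_simps)
  then show ?thesis
    unfolding F_energy_eq_char_energy .
qed

end

theorem lemma1:
  fixes P Q Pt Px Ptt Pxx Qt Qx Qtt Qxx :: "real \<Rightarrow> real \<Rightarrow> real"
    and \<tau>1 \<tau>2 :: real
  assumes smoothP: "smooth_strip \<tau>1 \<tau>2 P"
    and smoothQ: "smooth_strip \<tau>1 \<tau>2 Q"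
    and perP: "\<forall>t\<in>{\<tau>1..\<tau>2}. \<forall>x. P t (x + 2 * pi) = P t x"
    and perQ: "\<forall>t\<in>{\<tau>1..\<tau>2}. \<forall>x. Q t (x + 2 * pi) = Q t x"
    and dPt: "\<forall>t\<in>{\<tau>1..\<tau>2}. \<forall>x. ((\<lambda>s. P s x) has_real_derivative Pt t x) (at t within {\<tau>1..\<tau>2})"
    and dPx: "\<forall>t\<in>{\<tau>1..\<tau>2}. \<forall>x. ((\<lambda>y. P t y) has_real_derivative Px t x) (at x)"
    and dPtt: "\<forall>t\<in>{\<tau>1..\<tau>2}. \<forall>x. ((\<lambda>s. Pt s x) has_real_derivative Ptt t x) (at t within {\<tau>1..\<tau>2})"
    and dPxx: "\<forall>t\<in>{\<tau>1..\<tau>2}. \<forall>x. ((\<lambda>y. Px t y) has_real_derivative Pxx t x) (at x)"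
    and dQt: "\<forall>t\<in>{\<tau>1..\<tau>2}. \<forall>x. ((\<lambda>s. Q s x) has_real_derivative Qt t x) (at t within {\<tau>1..\<tau>2})"
    and dQx: "\<forall>t\<in>{\<tau>1..\<tau>2}. \<forall>x. ((\<lambda>y. Q t y) has_real_derivative Qx t x) (at x)"
    and dQtt: "\<forall>t\<in>{\<tau>1..\<tau>2}. \<forall>x. ((\<lambda>s. Qt s x) has_real_derivative Qtt t x) (at t within {\<tau>1..\<tau>2})"
    and dQxx: "\<forall>t\<in>{\<tau>1..\<tau>2}. \<forall>x. ((\<lambda>y. Qx t y) has_real_derivative Qxx t x) (at x)"
    and eqP: "\<forall>t\<in>{\<tau>1..\<tau>2}. \<forall>x.
       Ptt t x - exp (-2*t) * Pxx t x - exp (2 * P t x) * ((Qt t x)^2 - exp (-2*t) * (Qx t x)^2) = 0"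
    and eqQ: "\<forall>t\<in>{\<tau>1..\<tau>2}. \<forall>x.
       Qtt t x - exp (-2*t) * Qxx t x + 2 * (Pt t x * Qt t x - exp (-2*t) * Px t x * Qx t x) = 0"
    and t12: "\<tau>1 \<le> \<tau>2" and t1: "2 \<le> \<tau>1"
    and Pbd: "\<forall>t\<in>{\<tau>1..\<tau>2}. \<forall>x. 1 \<le> P t x \<and> P t x \<le> t - 1"
  shows "\<forall>t\<in>{\<tau>1..\<tau>2}. F_energy P Pt Px Qt Qx t \<le> F_energy P Pt Px Qt Qx \<tau>1 * (\<tau>1 / t)^2"
proof (intro ballI)
  fix t assume t: "t \<in> {\<tau>1..\<tau>2}"
  show "F_energy P Pt Px Qt Qx t \<le> F_energy P Pt Px Qt Qx \<tau>1 * (\<tau>1 / t)^2"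
  proof (cases "\<tau>1 = \<tau>2")
    case True
    with t t1 show ?thesis by simp
  next
    case False
    with t12 interpret gowdy_solution_bounded P Q Pt Px Ptt Pxx Qt Qx Qtt Qxx \<tau>1 \<tau>2
      using assms by unfold_locales auto
    from t show ?thesis by (rule F_energy_decay)
  qed
qed

end
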